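(* Consider the model described in the context and the quantities $R_0$ and $R_1$ defined there. 1. If $R_0\le 1$, then $E_0=(\bar x,0,0,0)$ is the unique equilibrium of the system. 2. If $R_1\le 1<R_0$, then, in addition to $E_0$, the system has a CTL-inactivated infection equilibrium $E_1=(x_1,y_1,v_1,0)$ with $x_1,y_1,v_1>0$. 3. If $R_0>R_1>1$, then, in addition to $E_0$ and $E_1$, the system has a CTL-activated infection equilibrium $E_2=(x_2,y_2,v_2,z_2)$ with all entries strictly positive.
   Context: The model is $$\dot x(t)=n(x(t))-f(x(t),y(t),v(t))v(t),$$ $$\dot y(t)=\int_0^\infty f_1(\tau)f(x(t-\tau),y(t-\tau),v(t-\tau))v(t-\tau)e^{-\alpha_1\tau}\,d\tau-a\varphi_1(y(t))-p\varphi_1(y(t))\varphi_2(z(t)),$$ $$\dot v(t)=k\int_0^\infty f_2(\tau)e^{-\alpha_2\tau}\varphi_1(y(t-\tau))\,d\tau-uv(t),$$ $$\dot z(t)=c\int_0^\infty f_3(\tau)\varphi_1(y(t-\tau))\varphi_2(z(t-\tau))\,d\tau-b\varphi_2(z(t)).$$ Here $a,p,k,u,c,b>0$ and $\alpha_1,\alpha_2\ge0$ are constants. Assumptions on $f$: $f$ is continuously differentiable in the interior of $\mathbb{R}^3_+$, and (i) $f(0,y,v)=0$ for all $y,v\ge0$; (ii) $\partial f/\partial x>0$ for $x,y,v>0$; (iii) $\partial f/\partial y\le0$ and $\partial f/\partial v\le0$ for $x,y,v\ge0$. Assumption on $n$: $n$ is $C^1$, and there is $\bar x>0$ with $n(\bar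 x)=0$, $n>0$ on $[0,\bar x)$, and $n(x)<0$ for $x>\bar x$. Assumptions on $\varphi_1,\varphi_2$: each $\varphi_i$ is strictly increasing on $[0,\infty)$, with $\varphi_i(0)=0$, $\varphi_i'(0)=1$, $\varphi_i(s)\to\infty$ as $s\to\infty$, and $\varphi_i(s)\ge k_is$ for some $k_i>0$. Assumptions on the kernels: $f_i\ge0$; $\int_0^\infty f_1=\int_0^\infty f_2=1$; $\int_0^\infty f_3\le1$ and $\int_0^\infty f_3(\tau)e^{s\tau}\,d\tau<\infty$ for some $s>0$. Notation: $G_1=\int_0^\infty f_1(\tau)e^{-\alpha_1\tau}\,d\tau$, $G_2=\int_0^\infty f_2(\tau)e^{-\alpha_2\tau}\,d\tau$, $G_3=\int_0^\infty f_3(\tau)\,d\tau$. An equilibrium is a constant solution, i.e. a point in $\mathbb{R}^4_+$ satisfying $$n(x)=f(x,y,v)v,\qquad f(x,y,v)v=\tfrac{1}{G_1}\bigl(a\varphi_1(y)+p\varphi_1(y)\varphi_2(z)\bigr),$$ $$kG_2\varphi_1(y)=uv,\qquad cG_3\varphi_1(y)\varphi_2(z)=b\varphi_2(z).$$ Reproduction numbers: set $R(x,y,v)=\dfrac{kG_1G_2f(x,y,v)}{au}$ and $R_0=R(\bar x,0,0)$. Let $\hat y=\varphi_1^{-1}\bigl(b/(cG_3)\bigr)$ and $\hat v=kG_2\varphi_1(\hat y)/u$. Let $\hat x\in(0,\bar x)$ be a root of $n(x)-f(x,\hat y,\hat v)\hat v=0$, which exists. Then $R_1=R(\hat x,\hat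 y,\hat v)$. *)

theory Defs
  imports "HOL-Analysis.Analysis"
begin

text \<open>Equilibrium of the delayed CTL model: a point of the closed nonnegative
orthant satisfying the four steady-state equations (with the delay integrals
G1, G2, G3 already evaluated).\<close>
definition equilibrium ::
  "(real \<Rightarrow> real) \<Rightarrow> (real \<Rightarrow> real \<Rightarrow> real \<Rightarrow> real) \<Rightarrow> (real \<Rightarrow> real) \<Rightarrow> (real \<Rightarrow> real)
   \<Rightarrow> real \<Rightarrow> real \<Rightarrow> real \<Rightarrow> real \<Rightarrow> real \<Rightarrow> real \<Rightarrow> real \<Rightarrow> real \<Rightarrow> real
   \<Rightarrow> real \<Rightarrow> real \<Rightarrow> real \<Rightarrow> real \<Rightarrow> bool" where
  "equilibrium n f \<phi>1 \<phi>2 a p k u c b G1 G2 G3 x y v z \<longleftrightarrow>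
     x \<ge> 0 \<and> y \<ge> 0 \<and> v \<ge> 0 \<and> z \<ge> 0 \<and>
     n x = f x y v * v \<and>
     f x y v * v = (a * \<phi>1 y + p * \<phi>1 y * \<phi>2 z) / G1 \<and>
     k * G2 * \<phi>1 y = u * v \<and>
     c * G3 * \<phi>1 y * \<phi>2 z = b * \<phi>2 z"

definition Rnum ::
  "(real \<Rightarrow> real \<Rightarrow> real \<Rightarrow> real) \<Rightarrow> real \<Rightarrow> real \<Rightarrow> real \<Rightarrow> real \<Rightarrow> real
   \<Rightarrow> real \<Rightarrow> real \<Rightarrow> real \<Rightarrow> real" where
  "Rnum f k a u G1 G2 x y v = k * G1 * G2 * f x y v / (a * u)"

end

theory Submission
  imports Defs
begin

text \<open>Write threshold = a u / (k G1 G2), so that R(x,y,v) > 1 iff f(x,y,v) > threshold. At an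
  equilibrium with y > 0 the balance equations force v > 0, 0 < x < xbar and f(x,y,v) \<ge> threshold;
  as f increases in x and decreases in y and v, this gives f(xbar,0,0) > threshold, i.e. R0 > 1.
  Hence E0 is the only equilibrium when R0 \<le> 1. For z = 0 the equations reduce to a single
  equation in x, solved by the intermediate value theorem when R0 > 1. For z > 0 the last equation
  pins y to yhat and hence v to vhat; the second equation then prescribes \<phi>2 z, which is
  positive exactly when R1 > 1.\<close>

locale unbounded_increasing =
  fixes \<phi> :: "real \<Rightarrow> real"
  assumes strict_mono: "strict_mono_on {0..} \<phi>"
    and cont: "continuous_on {0..} \<phi>"
    and zero: "\<phi> 0 = 0"
    and unbounded: "filterlim \<phi> at_top at_top"
begin

lemma pos: "0 < s \<Longrightarrow> 0 < \<phi> s"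
  using strict_mono_onD[OF strict_mono, of 0 s] zero by simp

lemma nonneg: "0 \<le> s \<Longrightarrow> 0 \<le> \<phi> s"
  using pos[of s] zero by (cases "s = 0") auto

lemma eq_0_iff: "0 \<le> s \<Longrightarrow> \<phi> s = 0 \<longleftrightarrow> s = 0"
  using pos[of s] zero by (cases "s = 0") auto

lemma surj_nonneg:
  assumes "0 \<le> t"
  obtains s where "0 \<le> s" "\<phi> s = t"
proof -
  obtain N where N: "\<And>x. x \<ge> N \<Longrightarrow> t \<le> \<phi> x"
    using unbounded by (auto simp: filterlim_at_top eventually_at_top_linorder)
  have "continuous_on {0..max N 0} \<phi>"
    using cont by (rule continuous_on_subset) auto
  then show ?thesis
    using IVT'[of \<phi> 0 t "max N 0"] N[of "max N 0"] assms zero that by auto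
qed

lemma inj_on_nonneg: "inj_on \<phi> {0..}"
  using strict_mono by (rule strict_mono_on_imp_inj_on)

lemma image_Icc:
  assumes "0 \<le> M"
  shows "\<phi> ` {0..M} = {0..\<phi> M}"
proof
  show "\<phi> ` {0..M} \<subseteq> {0..\<phi> M}"
  proof
    fix r assume "r \<in> \<phi> ` {0..M}"
    then obtain s where s: "s \<in> {0..M}" "r = \<phi> s" by blast
    then have "\<phi> s \<le> \<phi> M"
      using strict_mono_onD[OF strict_mono, of s M] by (cases "s = M") auto
    then show "r \<in> {0..\<phi> M}" using s nonneg by auto
  qed
  show "{0..\<phi> M} \<subseteq> \<phi> ` {0..M}"
  proof
    fix r assume "r \<in> {0..\<phi> M}"
    moreover have "continuous_on {0..M} \<phi>" using cont by (rule continuous_on_subset) auto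
    ultimately obtain s where "0 \<le> s" "s \<le> M" "\<phi> s = r"
      using IVT'[of \<phi> 0 r M] assms zero by auto
    then show "r \<in> \<phi> ` {0..M}" by force
  qed
qed

abbreviation inverse_on_nonneg :: "real \<Rightarrow> real" where
  "inverse_on_nonneg \<equiv> the_inv_into {0..} \<phi>"

lemma inverse_on_nonneg:
  assumes "0 \<le> t"
  shows "0 \<le> inverse_on_nonneg t" "\<phi> (inverse_on_nonneg t) = t"
proof -
  obtain s where s: "0 \<le> s" "\<phi> s = t" using surj_nonneg[OF assms] .
  then have "inverse_on_nonneg t = s" using the_inv_into_f_f[OF inj_on_nonneg, of s] by simp
  then show "0 \<le> inverse_on_nonneg t" "\<phi> (inverse_on_nonneg t) = t" using s by simp_all
qed

text \<open>Continuity of the inverse on a compact interval {0..M} is library material; it transfers to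
  {0..} because each t has the relative neighbourhood {0..<\<phi> M} for \<phi> M = t + 1.\<close>
lemma continuous_on_inverse_on_nonneg: "continuous_on {0..} inverse_on_nonneg"
  unfolding continuous_on_eq_continuous_within
proof
  fix t :: real assume "t \<in> {0..}"
  obtain M where M: "0 \<le> M" "\<phi> M = t + 1" using surj_nonneg[of "t + 1"] \<open>t \<in> {0..}\<close> by auto
  have inj: "inj_on \<phi> {0..M}" using inj_on_nonneg by (rule inj_on_subset) auto
  have "continuous_on (\<phi> ` {0..M}) (the_inv_into {0..M} \<phi>)"
    by (rule continuous_on_inv_into[OF continuous_on_subset[OF cont] compact_Icc inj]) auto
  moreover have "the_inv_into {0..M} \<phi> r = inverse_on_nonneg r" if "r \<in> \<phi> ` {0..M}" for r
  proof -
    obtain s where s: "s \<in> {0..M}" "r = \<phi> s" using \<open>r \<in> \<phi> ` {0..M}\<close> by (rule imageE)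
    then have "inverse_on_nonneg r = s" using the_inv_into_f_f[OF inj_on_nonneg, of s] by simp
    moreover have "the_inv_into {0..M} \<phi> r = s" using s the_inv_into_f_f[OF inj] by simp
    ultimately show ?thesis by simp
  qed
  ultimately have "continuous_on {0..t + 1} inverse_on_nonneg"
    unfolding image_Icc[OF M(1)] M(2) using continuous_on_cong by blast
  then have "continuous (at t within {0..t + 1}) inverse_on_nonneg"
    using \<open>t \<in> {0..}\<close> by (simp add: continuous_on_eq_continuous_within)
  moreover have "at t within {0..t + 1} = at t within {0..}"
    by (rule at_within_nhd[of _ "{..<t + 1}"]) auto
  ultimately show "continuous (at t within {0..}) inverse_on_nonneg" by simp
qed

end

lemma has_real_derivative_partials:
  fixes g :: "real \<Rightarrow> real \<Rightarrow> real \<Rightarrow> real"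
  assumes "((\<lambda>(x', y', v'). g x' y' v') has_derivative
             (\<lambda>(h1, h2, h3). A * h1 + B * h2 + C * h3)) (at (x, y, v))"
  shows "((\<lambda>t. g t y v) has_real_derivative A) (at x)"
    and "((\<lambda>t. g x t v) has_real_derivative B) (at y)"
    and "((\<lambda>t. g x y t) has_real_derivative C) (at v)"
proof -
  have "((\<lambda>t. (t, y, v)) has_derivative (\<lambda>h. (h, 0, 0))) (at x)"
    "((\<lambda>t. (x, t, v)) has_derivative (\<lambda>h. (0, h, 0))) (at y)"
    "((\<lambda>t. (x, y, t)) has_derivative (\<lambda>h. (0, 0, h))) (at v)"
    by (auto intro!: derivative_eq_intros simp: zero_prod_def)
  from this[THEN has_derivative_compose, OF assms]
  show "((\<lambda>t. g t y v) has_real_derivative A) (at x)"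
    "((\<lambda>t. g x t v) has_real_derivative B) (at y)"
    "((\<lambda>t. g x y t) has_real_derivative C) (at v)"
    by (simp_all add: has_field_derivative_def mult_commute_abs)
qed

lemma orthant_monotonicity_of_partials:
  fixes g gx gy gv :: "real \<Rightarrow> real \<Rightarrow> real \<Rightarrow> real"
  assumes deriv: "\<forall>x y v. x > 0 \<and> y > 0 \<and> v > 0 \<longrightarrow>
          ((\<lambda>(x', y', v'). g x' y' v') has_derivative
             (\<lambda>(h1, h2, h3). gx x y v * h1 + gy x y v * h2 + gv x y v * h3)) (at (x, y, v))"
    and signs: "\<forall>x y v. x > 0 \<and> y > 0 \<and> v > 0 \<longrightarrow>
          gx x y v > 0 \<and> gy x y v \<le> 0 \<and> gv x y v \<le> 0"
  shows "\<And>x x' y v. 0 < x \<Longrightarrow> x < x' \<Longrightarrow> 0 < y \<Longrightarrow> 0 < v \<Longrightarrow> g x y v < g x' y v"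
    and "\<And>x y y' v. 0 < x \<Longrightarrow> 0 < y \<Longrightarrow> y \<le> y' \<Longrightarrow> 0 < v \<Longrightarrow> g x y' v \<le> g x y v"
    and "\<And>x y v v'. 0 < x \<Longrightarrow> 0 < y \<Longrightarrow> 0 < v \<Longrightarrow> v \<le> v' \<Longrightarrow> g x y v' \<le> g x y v"
proof -
  note partials = has_real_derivative_partials[OF deriv[rule_format]]
  show "g x y v < g x' y v" if "0 < x" "x < x'" "0 < y" "0 < v" for x x' y v
  proof (rule DERIV_pos_imp_increasing[where f = "\<lambda>t. g t y v", OF \<open>x < x'\<close>])
    fix t assume "x \<le> t"
    then show "\<exists>d. ((\<lambda>t. g t y v) has_real_derivative d) (at t) \<and> 0 < d"
      using partials(1)[of t y v] signs that by auto
  qed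
  show "g x y' v \<le> g x y v" if "0 < x" "0 < y" "y \<le> y'" "0 < v" for x y y' v
  proof (rule DERIV_nonpos_imp_nonincreasing[where f = "\<lambda>t. g x t v", OF \<open>y \<le> y'\<close>])
    fix t assume "y \<le> t"
    then show "\<exists>d. ((\<lambda>t. g x t v) has_real_derivative d) (at t) \<and> d \<le> 0"
      using partials(2)[of x t v] signs that by auto
  qed
  show "g x y v' \<le> g x y v" if "0 < x" "0 < y" "0 < v" "v \<le> v'" for x y v v'
  proof (rule DERIV_nonpos_imp_nonincreasing[where f = "\<lambda>t. g x y t", OF \<open>v \<le> v'\<close>])
    fix t assume "v \<le> t"
    then show "\<exists>d. ((\<lambda>t. g x y t) has_real_derivative d) (at t) \<and> d \<le> 0"
      using partials(3)[of x y t] signs that by auto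
  qed
qed

lemma set_integral_exp_weight_pos:
  fixes g :: "real \<Rightarrow> real"
  assumes integrable: "set_integrable lborel {0..} g"
    and integral_pos: "(LINT \<tau>:{0..}|lborel. g \<tau>) > 0"
    and nonneg: "\<And>\<tau>. \<tau> \<ge> 0 \<Longrightarrow> g \<tau> \<ge> 0" and "\<alpha> \<ge> 0"
  shows "(LINT \<tau>:{0..}|lborel. g \<tau> * exp (- \<alpha> * \<tau>)) > 0"
proof -
  let ?h = "\<lambda>\<tau>. indicator {0..} \<tau> * g \<tau> :: real"
  let ?k = "\<lambda>\<tau>. indicator {0..} \<tau> * (g \<tau> * exp (- \<alpha> * \<tau>)) :: real"
  have h_int: "integrable lborel ?h" using integrable by (simp add: set_integrable_def)
  have "(\<lambda>\<tau>. ?h \<tau> * exp (- \<alpha> * \<tau>)) \<in> borel_measurable lborel"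
    using h_int by measurable
  then have k_meas: "?k \<in> borel_measurable lborel" by (simp add: mult.assoc)
  have bound: "norm (?k \<tau>) \<le> norm (?h \<tau>)" for \<tau>
  proof (cases "\<tau> \<ge> 0")
    case True
    then have "exp (- \<alpha> * \<tau>) \<le> 1" using \<open>\<alpha> \<ge> 0\<close> by simp
    then show ?thesis using True nonneg[OF True] by (simp add: abs_mult mult_left_le)
  qed simp
  have k_int: "integrable lborel ?k"
    by (rule Bochner_Integration.integrable_bound[OF h_int k_meas]) (use bound in auto)
  have k_nonneg: "AE \<tau> in lborel. 0 \<le> ?k \<tau>" using nonneg by (auto simp: indicator_def)
  have "integral\<^sup>L lborel ?k \<noteq> 0"
  proof
    assume "integral\<^sup>L lborel ?k = 0"
    then have "AE \<tau> in lborel. ?k \<tau> = 0" using integral_nonneg_eq_0_iff_AE[OF k_int k_nonneg] by simp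
    then have "AE \<tau> in lborel. ?h \<tau> = 0" by (rule AE_mp) (auto intro!: AE_I2)
    then have "integral\<^sup>L lborel ?h = 0" by (simp add: integral_eq_zero_AE)
    then show False using integral_pos by (simp add: set_lebesgue_integral_def)
  qed
  moreover have "integral\<^sup>L lborel ?k \<ge> 0" using k_nonneg by (simp add: integral_nonneg_AE)
  ultimately show ?thesis by (simp add: set_lebesgue_integral_def)
qed

locale ctl_model =
  phi1: unbounded_increasing \<phi>1 + phi2: unbounded_increasing \<phi>2
  for \<phi>1 \<phi>2 :: "real \<Rightarrow> real" +
  fixes n :: "real \<Rightarrow> real" and f :: "real \<Rightarrow> real \<Rightarrow> real \<Rightarrow> real"
    and a p k u c b G1 G2 G3 xbar :: real
  assumes params_pos: "0 < a" "0 < p" "0 < k" "0 < u" "0 < c" "0 < b"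
    and G_pos: "0 < G1" "0 < G2" "0 < G3"
    and f_cont: "continuous_on {(x, y, v). x \<ge> 0 \<and> y \<ge> 0 \<and> v \<ge> 0} (\<lambda>(x, y, v). f x y v)"
    and f_zero: "\<And>y v. 0 \<le> y \<Longrightarrow> 0 \<le> v \<Longrightarrow> f 0 y v = 0"
    and f_strict_mono_x: "\<And>x x' y v. 0 < x \<Longrightarrow> x < x' \<Longrightarrow> 0 < y \<Longrightarrow> 0 < v \<Longrightarrow> f x y v < f x' y v"
    and f_antimono_y: "\<And>x y y' v. 0 < x \<Longrightarrow> 0 < y \<Longrightarrow> y \<le> y' \<Longrightarrow> 0 < v \<Longrightarrow> f x y' v \<le> f x y v"
    and f_antimono_v: "\<And>x y v v'. 0 < x \<Longrightarrow> 0 < y \<Longrightarrow> 0 < v \<Longrightarrow> v \<le> v' \<Longrightarrow> f x y v' \<le> f x y v"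
    and n_cont: "continuous_on {0..} n"
    and xbar_pos: "0 < xbar" and n_xbar: "n xbar = 0"
    and n_pos: "\<And>x. 0 \<le> x \<Longrightarrow> x < xbar \<Longrightarrow> 0 < n x"
    and n_neg: "\<And>x. xbar < x \<Longrightarrow> n x < 0"
begin

abbreviation is_equilibrium :: "real \<Rightarrow> real \<Rightarrow> real \<Rightarrow> real \<Rightarrow> bool" where
  "is_equilibrium \<equiv> equilibrium n f \<phi>1 \<phi>2 a p k u c b G1 G2 G3"

definition threshold :: real where
  "threshold = a * u / (k * G1 * G2)"

lemma threshold_pos: "0 < threshold"
  using params_pos G_pos by (simp add: threshold_def)

lemma Rnum_gt_1_iff: "1 < Rnum f k a u G1 G2 x y v \<longleftrightarrow> threshold < f x y v"
  using params_pos G_pos by (simp add: Rnum_def threshold_def field_simps)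

lemma n_nonneg: "0 \<le> x \<Longrightarrow> x \<le> xbar \<Longrightarrow> 0 \<le> n x"
  using n_pos[of x] n_xbar by (cases "x = xbar") auto

text \<open>Monotonicity in y and v is only available in the open orthant; the boundary value
  f x 0 0 is reached by continuity along the diagonal y = v.\<close>
lemma f_le_f_origin:
  assumes "0 < x" "0 < y" "0 < v"
  shows "f x y v \<le> f x 0 0"
proof -
  define e0 where "e0 = min y v"
  have e0: "0 < e0" using assms by (simp add: e0_def)
  have "continuous_on {0..e0} (\<lambda>e. (\<lambda>(x, y, v). f x y v) (x, e, e))"
    by (rule continuous_on_compose2[OF f_cont]) (auto intro!: continuous_intros simp: assms less_imp_le)
  then have "((\<lambda>e. f x e e) \<longlongrightarrow> f x 0 0) (at_right 0)"
    using continuous_on_Icc_at_rightD[OF _ e0] by simp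
  moreover have "eventually (\<lambda>e. f x y v \<le> f x e e) (at_right 0)"
    unfolding eventually_at_right[OF e0]
  proof (intro exI[of _ e0] conjI allI impI)
    fix e :: real assume "0 < e" "e < e0"
    then have "f x y v \<le> f x e v" using f_antimono_y[of x e y v] assms by (simp add: e0_def)
    also have "\<dots> \<le> f x e e" using f_antimono_v[of x e e v] assms \<open>0 < e\<close> \<open>e < e0\<close> by (simp add: e0_def)
    finally show "f x y v \<le> f x e e" .
  qed (rule e0)
  ultimately show ?thesis by (rule tendsto_lowerbound) simp
qed

lemma disease_free_equilibrium: "is_equilibrium xbar 0 0 0"
  using xbar_pos n_xbar phi1.zero phi2.zero by (simp add: equilibrium_def)

lemma infected_equilibrium_bounds:
  assumes eq: "is_equilibrium x y v z" and "0 < y"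
  shows "0 < x" "x < xbar" "0 < v" "threshold \<le> f x y v"
proof -
  have nonneg: "0 \<le> x" "0 \<le> z"
    and balance_x: "n x = f x y v * v"
    and balance_y: "f x y v * v = (a * \<phi>1 y + p * \<phi>1 y * \<phi>2 z) / G1"
    and balance_v: "k * G2 * \<phi>1 y = u * v"
    using eq by (auto simp: equilibrium_def)
  have "0 < \<phi>1 y" using phi1.pos[OF \<open>0 < y\<close>] .
  then show "0 < v" using balance_v params_pos G_pos by (metis mult_pos_pos zero_less_mult_pos)
  have "threshold * v = a * \<phi>1 y / G1"
    using balance_v params_pos G_pos by (simp add: threshold_def field_simps)
  also have "\<dots> \<le> f x y v * v"
    using balance_y params_pos G_pos \<open>0 < \<phi>1 y\<close> phi2.nonneg[OF nonneg(2)]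
    by (simp add: divide_right_mono)
  finally show rate: "threshold \<le> f x y v" using \<open>0 < v\<close> by simp
  then have "0 < n x" using balance_x threshold_pos \<open>0 < v\<close> by simp
  then show "x < xbar" using n_neg[of x] n_xbar by (cases x xbar rule: linorder_cases) auto
  show "0 < x" using rate nonneg(1) f_zero[of y v] \<open>0 < y\<close> \<open>0 < v\<close> threshold_pos
    by (cases "x = 0") auto
qed

lemma equilibrium_iff_disease_free:
  assumes "f xbar 0 0 \<le> threshold"
  shows "is_equilibrium x y v z \<longleftrightarrow> (x, y, v, z) = (xbar, 0, 0, 0)"
proof
  assume eq: "is_equilibrium x y v z"
  then have nonneg: "0 \<le> x" "0 \<le> y" "0 \<le> z"
    and balance_x: "n x = f x y v * v"
    and balance_v: "k * G2 * \<phi>1 y = u * v"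
    and balance_z: "c * G3 * \<phi>1 y * \<phi>2 z = b * \<phi>2 z"
    by (auto simp: equilibrium_def)
  show "(x, y, v, z) = (xbar, 0, 0, 0)"
  proof (cases "y = 0")
    case True
    then have "v = 0" using balance_v phi1.zero params_pos by simp
    then have "x = xbar"
      using balance_x n_pos[of x] n_neg[of x] nonneg by (cases x xbar rule: linorder_cases) auto
    moreover have "z = 0"
      using balance_z True phi1.zero params_pos phi2.eq_0_iff[OF nonneg(3)] by simp
    ultimately show ?thesis using True \<open>v = 0\<close> by simp
  next
    case False
    then have "0 < y" using nonneg by simp
    note bounds = infected_equilibrium_bounds[OF eq this]
    have "threshold \<le> f x y v" by (fact bounds(4))
    also have "\<dots> < f xbar y v" using f_strict_mono_x bounds(1-3) \<open>0 < y\<close> by blast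
    also have "\<dots> \<le> f xbar 0 0" using f_le_f_origin xbar_pos \<open>0 < y\<close> bounds(3) by blast
    finally show ?thesis using assms by simp
  qed
qed (use disease_free_equilibrium in simp)

text \<open>For z = 0 the last three equilibrium equations hold along the curve v = n x / threshold,
  \<phi>1 y = u v / (k G2) exactly where f x y v = threshold. On this curve f vanishes at x = 0 and
  equals f xbar 0 0 at x = xbar, so the intermediate value theorem yields the equilibrium.\<close>
lemma exists_CTL_inactivated_equilibrium:
  assumes "threshold < f xbar 0 0"
  shows "\<exists>x1 y1 v1. 0 < x1 \<and> 0 < y1 \<and> 0 < v1 \<and> is_equilibrium x1 y1 v1 0"
proof -
  define v_of where "v_of x = n x / threshold" for x
  define y_of where "y_of x = phi1.inverse_on_nonneg (u * v_of x / (k * G2))" for x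
  define h where "h x = f x (y_of x) (v_of x)" for x
  have v_nonneg: "0 \<le> v_of x" if "x \<in> {0..xbar}" for x
    using n_nonneg that threshold_pos by (simp add: v_of_def)
  then have arg_nonneg: "0 \<le> u * v_of x / (k * G2)" if "x \<in> {0..xbar}" for x
    using that params_pos G_pos by simp
  note y_of = phi1.inverse_on_nonneg[OF arg_nonneg, folded y_of_def]
  have n_cont': "continuous_on {0..xbar} n" using n_cont by (rule continuous_on_subset) auto
  have "continuous_on {0..xbar} y_of" unfolding y_of_def v_of_def
    by (rule continuous_on_compose2[OF phi1.continuous_on_inverse_on_nonneg])
      (use n_cont' arg_nonneg threshold_pos params_pos G_pos in \<open>auto intro!: continuous_intros simp: v_of_def\<close>)
  then have "continuous_on {0..xbar} (\<lambda>x. (\<lambda>(x, y, v). f x y v) (x, y_of x, v_of x))"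
    using n_cont' v_nonneg y_of(1) threshold_pos
    by (intro continuous_on_compose2[OF f_cont]) (auto intro!: continuous_intros simp: v_of_def)
  then have h_cont: "continuous_on {0..xbar} h" by (simp add: h_def)
  have h_0: "h 0 = 0" using f_zero y_of(1) v_nonneg xbar_pos by (simp add: h_def)
  have h_xbar: "h xbar = f xbar 0 0"
    using n_xbar phi1.inverse_on_nonneg[of 0] phi1.eq_0_iff by (simp add: h_def y_of_def v_of_def)
  obtain x1 where x1: "0 \<le> x1" "x1 \<le> xbar" "h x1 = threshold"
    using IVT'[of h 0 threshold xbar, OF _ _ _ h_cont] h_0 h_xbar assms threshold_pos xbar_pos by auto
  then have x1_pos: "0 < x1" "x1 < xbar"
    using h_0 h_xbar assms threshold_pos by (metis order.not_eq_order_implies_strict less_irrefl)+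
  then have v1_pos: "0 < v_of x1" using n_pos threshold_pos by (simp add: v_of_def)
  have y1: "0 \<le> y_of x1" "\<phi>1 (y_of x1) = u * v_of x1 / (k * G2)" using y_of x1 by auto
  then have y1_pos: "0 < y_of x1"
    using v1_pos params_pos G_pos phi1.zero by (cases "y_of x1 = 0") auto
  have rate: "f x1 (y_of x1) (v_of x1) = threshold" using x1(3) by (simp add: h_def)
  have "is_equilibrium x1 (y_of x1) (v_of x1) 0"
    unfolding equilibrium_def
  proof (intro conjI)
    show "n x1 = f x1 (y_of x1) (v_of x1) * v_of x1"
      using rate threshold_pos by (simp add: v_of_def)
    have "f x1 (y_of x1) (v_of x1) * v_of x1 = a * (u * v_of x1) / (k * G1 * G2)"
      using rate by (simp add: threshold_def)
    also have "\<dots> = a * \<phi>1 (y_of x1) / G1" using y1(2) params_pos G_pos by simp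
    finally show "f x1 (y_of x1) (v_of x1) * v_of x1 = (a * \<phi>1 (y_of x1) + p * \<phi>1 (y_of x1) * \<phi>2 0) / G1"
      by (simp add: phi2.zero)
    show "k * G2 * \<phi>1 (y_of x1) = u * v_of x1" using y1(2) params_pos G_pos by simp
  qed (use x1_pos y1 v1_pos phi2.zero in auto)
  then show ?thesis using x1_pos y1_pos v1_pos by blast
qed

lemma exists_CTL_activated_equilibrium:
  assumes yhat_def: "yhat = phi1.inverse_on_nonneg (b / (c * G3))"
    and vhat_def: "vhat = k * G2 * \<phi>1 yhat / u"
    and "0 < xhat" and balance_x: "n xhat = f xhat yhat vhat * vhat"
    and above: "threshold < f xhat yhat vhat"
  shows "\<exists>x2 y2 v2 z2. 0 < x2 \<and> 0 < y2 \<and> 0 < v2 \<and> 0 < z2 \<and> is_equilibrium x2 y2 v2 z2"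
proof -
  have "0 < b / (c * G3)" using params_pos G_pos by simp
  note yhat = phi1.inverse_on_nonneg[OF less_imp_le[OF this], folded yhat_def]
  have "0 < yhat" using yhat \<open>0 < b / (c * G3)\<close> phi1.zero by (cases "yhat = 0") auto
  have "0 < vhat" using yhat \<open>0 < b / (c * G3)\<close> params_pos G_pos by (simp add: vhat_def)
  define q where "q = a * (f xhat yhat vhat / threshold - 1) / p"
  have "0 < q" using above threshold_pos params_pos by (simp add: q_def field_simps)
  obtain z where z: "0 \<le> z" "\<phi>2 z = q"
    by (rule phi2.surj_nonneg[OF less_imp_le[OF \<open>0 < q\<close>]])
  then have "0 < z" using \<open>0 < q\<close> phi2.zero by (cases "z = 0") auto
  have "is_equilibrium xhat yhat vhat z"
    unfolding equilibrium_def
  proof (intro conjI)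
    have "(a * \<phi>1 yhat + p * \<phi>1 yhat * \<phi>2 z) / G1 = \<phi>1 yhat * (a + p * \<phi>2 z) / G1"
      by (simp add: algebra_simps)
    also have "a + p * \<phi>2 z = a * f xhat yhat vhat / threshold"
      using z(2) params_pos threshold_pos by (simp add: q_def field_simps)
    also have "\<phi>1 yhat * (a * f xhat yhat vhat / threshold) / G1 = f xhat yhat vhat * vhat"
      using params_pos G_pos by (simp add: vhat_def threshold_def field_simps)
    finally show "f xhat yhat vhat * vhat = (a * \<phi>1 yhat + p * \<phi>1 yhat * \<phi>2 z) / G1" ..
    show "c * G3 * \<phi>1 yhat * \<phi>2 z = b * \<phi>2 z" using yhat(2) params_pos G_pos by simp
  qed (use \<open>0 < xhat\<close> \<open>0 < yhat\<close> \<open>0 < vhat\<close> z balance_x params_pos in \<open>auto simp: vhat_def\<close>)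
  then show ?thesis using \<open>0 < xhat\<close> \<open>0 < yhat\<close> \<open>0 < vhat\<close> \<open>0 < z\<close> by blast
qed

end

theorem theorem2:
  fixes n :: "real \<Rightarrow> real" and f :: "real \<Rightarrow> real \<Rightarrow> real \<Rightarrow> real"
    and \<phi>1 \<phi>2 :: "real \<Rightarrow> real" and f1 f2 f3 :: "real \<Rightarrow> real"
    and a p k u c b \<alpha>1 \<alpha>2 xbar :: real
  defines "G1 \<equiv> (LINT \<tau>:{0..}|lborel. f1 \<tau> * exp (- \<alpha>1 * \<tau>))"
    and "G2 \<equiv> (LINT \<tau>:{0..}|lborel. f2 \<tau> * exp (- \<alpha>2 * \<tau>))"
    and "G3 \<equiv> (LINT \<tau>:{0..}|lborel. f3 \<tau>)"
  assumes params: "a > 0" "p > 0" "k > 0" "u > 0" "c > 0" "b > 0" "\<alpha>1 \<ge> 0" "\<alpha>2 \<ge> 0"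
    (* f: continuous on the closed orthant, C^1 in its interior *)
    and f_cont: "continuous_on {(x, y, v). x \<ge> 0 \<and> y \<ge> 0 \<and> v \<ge> 0} (\<lambda>(x, y, v). f x y v)"
    and f_C1: "\<exists>fx fy fv :: real \<Rightarrow> real \<Rightarrow> real \<Rightarrow> real.
       continuous_on {(x, y, v). x > 0 \<and> y > 0 \<and> v > 0} (\<lambda>(x, y, v). fx x y v) \<and>
       continuous_on {(x, y, v). x > 0 \<and> y > 0 \<and> v > 0} (\<lambda>(x, y, v). fy x y v) \<and>
       continuous_on {(x, y, v). x > 0 \<and> y > 0 \<and> v > 0} (\<lambda>(x, y, v). fv x y v) \<and>
       (\<forall>x y v. x > 0 \<and> y > 0 \<and> v > 0 \<longrightarrow>
          ((\<lambda>(x', y', v'). f x' y' v') has_derivative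
             (\<lambda>(h1, h2, h3). fx x y v * h1 + fy x y v * h2 + fv x y v * h3)) (at (x, y, v))) \<and>
       (\<forall>x y v. x > 0 \<and> y > 0 \<and> v > 0 \<longrightarrow>
          fx x y v > 0 \<and> fy x y v \<le> 0 \<and> fv x y v \<le> 0)"
    and f_zero: "\<And>y v. y \<ge> 0 \<Longrightarrow> v \<ge> 0 \<Longrightarrow> f 0 y v = 0"
    (* n *)
    and n_C1: "\<exists>n'. continuous_on {0..} n' \<and> (\<forall>x\<ge>0. (n has_real_derivative n' x) (at x within {0..}))"
    and xbar: "xbar > 0" "n xbar = 0" "\<And>x. 0 \<le> x \<Longrightarrow> x < xbar \<Longrightarrow> n x > 0"
      "\<And>x. x > xbar \<Longrightarrow> n x < 0"
    (* phi_1, phi_2 *)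
    and \<phi>: "\<And>\<phi>. \<phi> \<in> {\<phi>1, \<phi>2} \<Longrightarrow> strict_mono_on {0..} \<phi> \<and> continuous_on {0..} \<phi> \<and> \<phi> 0 = 0 \<and>
        (\<phi> has_real_derivative 1) (at 0 within {0..}) \<and> filterlim \<phi> at_top at_top \<and>
        (\<exists>ki>0. \<forall>s\<ge>0. \<phi> s \<ge> ki * s)"
    (* kernels *)
    and kernels_nonneg: "\<And>\<tau>. \<tau> \<ge> 0 \<Longrightarrow> f1 \<tau> \<ge> 0 \<and> f2 \<tau> \<ge> 0 \<and> f3 \<tau> \<ge> 0"
    and f1_int: "set_integrable lborel {0..} f1" "(LINT \<tau>:{0..}|lborel. f1 \<tau>) = 1"
    and f2_int: "set_integrable lborel {0..} f2" "(LINT \<tau>:{0..}|lborel. f2 \<tau>) = 1"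
    and f3_int: "set_integrable lborel {0..} f3" "G3 \<le> 1"
      "\<exists>s>0. set_integrable lborel {0..} (\<lambda>\<tau>. f3 \<tau> * exp (s * \<tau>))"
    and G3_pos: "G3 > 0"
  shows
    "(Rnum f k a u G1 G2 xbar 0 0 \<le> 1 \<longrightarrow>
        (\<forall>x y v z. equilibrium n f \<phi>1 \<phi>2 a p k u c b G1 G2 G3 x y v z \<longleftrightarrow>
                   (x, y, v, z) = (xbar, 0, 0, 0))) \<and>
     (\<forall>xhat. let yhat = the_inv_into {0..} \<phi>1 (b / (c * G3));
                 vhat = k * G2 * \<phi>1 yhat / u;
                 R0 = Rnum f k a u G1 G2 xbar 0 0;
                 R1 = Rnum f k a u G1 G2 xhat yhat vhat
             in (0 < xhat \<and> xhat < xbar \<and> n xhat - f xhat yhat vhat * vhat = 0) \<longrightarrow>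
       ((R1 \<le> 1 \<and> 1 < R0 \<longrightarrow>
           equilibrium n f \<phi>1 \<phi>2 a p k u c b G1 G2 G3 xbar 0 0 0 \<and>
           (\<exists>x1 y1 v1. x1 > 0 \<and> y1 > 0 \<and> v1 > 0 \<and>
              equilibrium n f \<phi>1 \<phi>2 a p k u c b G1 G2 G3 x1 y1 v1 0)) \<and>
        (R0 > R1 \<and> R1 > 1 \<longrightarrow>
           equilibrium n f \<phi>1 \<phi>2 a p k u c b G1 G2 G3 xbar 0 0 0 \<and>
           (\<exists>x1 y1 v1. x1 > 0 \<and> y1 > 0 \<and> v1 > 0 \<and>
              equilibrium n f \<phi>1 \<phi>2 a p k u c b G1 G2 G3 x1 y1 v1 0) \<and>
           (\<exists>x2 y2 v2 z2. x2 > 0 \<and> y2 > 0 \<and> v2 > 0 \<and> z2 > 0 \<and>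
              equilibrium n f \<phi>1 \<phi>2 a p k u c b G1 G2 G3 x2 y2 v2 z2))))"
proof -
  obtain fx fy fv :: "real \<Rightarrow> real \<Rightarrow> real \<Rightarrow> real" where
    deriv: "\<forall>x y v. x > 0 \<and> y > 0 \<and> v > 0 \<longrightarrow>
          ((\<lambda>(x', y', v'). f x' y' v') has_derivative
             (\<lambda>(h1, h2, h3). fx x y v * h1 + fy x y v * h2 + fv x y v * h3)) (at (x, y, v))"
    and signs: "\<forall>x y v. x > 0 \<and> y > 0 \<and> v > 0 \<longrightarrow> fx x y v > 0 \<and> fy x y v \<le> 0 \<and> fv x y v \<le> 0"
    using f_C1 by blast
  obtain n' where "\<forall>x\<ge>0. (n has_real_derivative n' x) (at x within {0..})" using n_C1 by blast
  then have "continuous_on {0..} n"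
    unfolding continuous_on_eq_continuous_within using DERIV_continuous by blast
  moreover have "0 < G1" unfolding G1_def
    by (rule set_integral_exp_weight_pos) (use f1_int kernels_nonneg params(7) in auto)
  moreover have "0 < G2" unfolding G2_def
    by (rule set_integral_exp_weight_pos) (use f2_int kernels_nonneg params(8) in auto)
  moreover have "unbounded_increasing \<phi>1" "unbounded_increasing \<phi>2"
    using \<phi>[of \<phi>1] \<phi>[of \<phi>2] unfolding unbounded_increasing_def by auto
  ultimately interpret ctl_model \<phi>1 \<phi>2 n f a p k u c b G1 G2 G3 xbar
    using params G3_pos f_cont f_zero xbar orthant_monotonicity_of_partials[OF deriv signs]
    by (intro ctl_model.intro ctl_model_axioms.intro) auto
  have "\<forall>x y v z. is_equilibrium x y v z \<longleftrightarrow> (x, y, v, z) = (xbar, 0, 0, 0)"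
    if "Rnum f k a u G1 G2 xbar 0 0 \<le> 1"
    using that equilibrium_iff_disease_free Rnum_gt_1_iff by (meson not_less)
  moreover have "\<exists>x1 y1 v1. 0 < x1 \<and> 0 < y1 \<and> 0 < v1 \<and> is_equilibrium x1 y1 v1 0"
    if "1 < Rnum f k a u G1 G2 xbar 0 0"
    using that exists_CTL_inactivated_equilibrium Rnum_gt_1_iff by blast
  moreover have "\<exists>x2 y2 v2 z2. 0 < x2 \<and> 0 < y2 \<and> 0 < v2 \<and> 0 < z2 \<and> is_equilibrium x2 y2 v2 z2"
    if "0 < xhat" "n xhat - f xhat yhat vhat * vhat = 0" "1 < Rnum f k a u G1 G2 xhat yhat vhat"
      and "yhat = phi1.inverse_on_nonneg (b / (c * G3))" "vhat = k * G2 * \<phi>1 yhat / u"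
    for xhat yhat vhat
    using that exists_CTL_activated_equilibrium Rnum_gt_1_iff by simp
  ultimately show ?thesis
    unfolding Let_def using disease_free_equilibrium by (auto dest: less_trans)
qed

end
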